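(* Let $\mathbb{R}^n$ be endowed with the $\ell_1$ norm, let $A\in\mathbb{R}^{m\times n}$ have at least two different columns, and let $f:\mathbb{R}^m\to\mathbb{R}\cup\{\infty\}$ be a differentiable convex function with $\mathrm{conv}(A)\subseteq\mathrm{dom}(f)$ and $\mu^\star_{f,A}>0$. Consider any run of the Frank–Wolfe algorithm with away steps (described below), with arbitrary step sizes $\alpha_k\in[0,\alpha_{\max}]$. Then at every iteration $k$ the direction $v$ chosen satisfies \[ \langle\nabla f(u_k),v\rangle^2\ge\frac{\mu^\star_{f,A}}{2}(f(u_k)-f^\star)\qquad\text{and}\qquad\langle\nabla f(u_k),v\rangle\le f^\star-f(u_k). \]
   Context: $\Delta_{n-1}=\{x\in\mathbb{R}^n_+:\sum_ix_i=1\}$, $e_i$ standard basis vectors, $a_1,\dots,a_n$ the columns of $A$, $\mathrm{conv}(A)=\{Ax:x\in\Delta_{n-1}\}$; for $x\in\Delta_{n-1}$, $I(x)=\{i:x_i>0\}$. $f^\star=\min_{x\in\Delta_{n-1}}f(Ax)$, $Z^\star=\{z\in\Delta_{n-1}:f(Az)=f^\star\}$, and $\mu^\star_{f,A}=\inf_{x\in\Delta_{n-1}\setminus Z^\star}\frac{2(f(Ax)-f^\star)}{\mathrm{dist}(x,Z^\star)^2}$ with $\mathrm{dist}(x,Z^\star)=\min_{z\in Z^\star}\|x-z\|_1$. Algorithm (Frank–Wolfe with away steps): pick $x_0\in\Delta_{n-1}$, $u_0=Ax_0$. For $k=0,1,2,\dots$: let $j\in\operatorname{argmin}_{i=1,\dots,n}\langle\nabla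 f(u_k),a_i\rangle$ and $\ell\in\operatorname{argmax}_{i\in I(x_k)}\langle\nabla f(u_k),a_i\rangle$. If $\langle\nabla f(u_k),a_j-u_k\rangle<\langle\nabla f(u_k),u_k-a_\ell\rangle$ or $|I(x_k)|=1$ (regular step), set $v=a_j-u_k$, $w=e_j-x_k$, $\alpha_{\max}=1$; otherwise (away step) set $v=u_k-a_\ell$, $w=x_k-e_\ell$, $\alpha_{\max}=\frac{\langle e_\ell,x_k\rangle}{1-\langle e_\ell,x_k\rangle}$. Choose $\alpha_k\in[0,\alpha_{\max}]$ and set $x_{k+1}=x_k+\alpha_kw$, $u_{k+1}=u_k+\alpha_kv=Ax_{k+1}$. *)

theory Defs
  imports "HOL-Analysis.Analysis"
begin

definition std_simplex :: "(real^'n::finite) set" where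
  "std_simplex = {x. (\<forall>i. 0 \<le> x $ i) \<and> (\<Sum>i\<in>UNIV. x $ i) = 1}"

definition supp_idx :: "real^'n::finite \<Rightarrow> 'n set" where
  "supp_idx x = {i. x $ i > 0}"

definition l1dist :: "real^'n::finite \<Rightarrow> real^'n \<Rightarrow> real" where
  "l1dist x z = (\<Sum>i\<in>UNIV. \<bar>x $ i - z $ i\<bar>)"

definition fstar :: "(real^'m \<Rightarrow> real) \<Rightarrow> real^'n::finite^'m::finite \<Rightarrow> real" where
  "fstar f A = Inf ((\<lambda>x. f (A *v x)) ` std_simplex)"

definition Zstar :: "(real^'m \<Rightarrow> real) \<Rightarrow> real^'n::finite^'m::finite \<Rightarrow> (real^'n) set" where
  "Zstar f A = {z \<in> std_simplex. f (A *v z) = fstar f A}"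

definition distZ :: "(real^'m \<Rightarrow> real) \<Rightarrow> real^'n::finite^'m::finite \<Rightarrow> real^'n \<Rightarrow> real" where
  "distZ f A x = Inf ((\<lambda>z. l1dist x z) ` Zstar f A)"

text \<open>mu^*_{f,A} as an extended real (infimum over the empty set is +\<infinity>).\<close>
definition mu_star :: "(real^'m \<Rightarrow> real) \<Rightarrow> real^'n::finite^'m::finite \<Rightarrow> ereal" where
  "mu_star f A = (INF x \<in> std_simplex - Zstar f A.
      ereal (2 * (f (A *v x) - fstar f A) / (distZ f A x)\<^sup>2))"

text \<open>Frank--Wolfe with away steps: one step, given gradient g = \<nabla>f(u_k), iterate x,
  FW vertex j and away vertex l.\<close>
definition fw_regular :: "real^'m \<Rightarrow> real^'n::finite^'m::finite \<Rightarrow> real^'n \<Rightarrow> 'n \<Rightarrow> 'n \<Rightarrow> bool" where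
  "fw_regular g A x j l \<longleftrightarrow>
     g \<bullet> (column j A - A *v x) < g \<bullet> (A *v x - column l A) \<or> card (supp_idx x) = 1"

definition fw_dir :: "real^'m \<Rightarrow> real^'n::finite^'m::finite \<Rightarrow> real^'n \<Rightarrow> 'n \<Rightarrow> 'n \<Rightarrow> real^'m" where
  "fw_dir g A x j l = (if fw_regular g A x j l then column j A - A *v x else A *v x - column l A)"

definition fw_w :: "real^'m \<Rightarrow> real^'n::finite^'m::finite \<Rightarrow> real^'n \<Rightarrow> 'n \<Rightarrow> 'n \<Rightarrow> real^'n" where
  "fw_w g A x j l = (if fw_regular g A x j l then axis j 1 - x else x - axis l 1)"

definition fw_amax :: "real^'m \<Rightarrow> real^'n::finite^'m::finite \<Rightarrow> real^'n \<Rightarrow> 'n \<Rightarrow> 'n \<Rightarrow> real" where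
  "fw_amax g A x j l = (if fw_regular g A x j l then 1 else x $ l / (1 - x $ l))"

definition fw_away_run ::
  "real^'n::finite^'m::finite \<Rightarrow> (real^'m \<Rightarrow> real^'m) \<Rightarrow> (nat \<Rightarrow> real^'n) \<Rightarrow> (nat \<Rightarrow> 'n) \<Rightarrow> (nat \<Rightarrow> 'n) \<Rightarrow> (nat \<Rightarrow> real) \<Rightarrow> bool" where
  "fw_away_run A grad x j l \<alpha> \<longleftrightarrow>
     x 0 \<in> std_simplex \<and>
     (\<forall>k. let g = grad (A *v x k) in
        (\<forall>i. g \<bullet> column (j k) A \<le> g \<bullet> column i A) \<and>
        l k \<in> supp_idx (x k) \<and>
        (\<forall>i\<in>supp_idx (x k). g \<bullet> column i A \<le> g \<bullet> column (l k) A) \<and>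
        0 \<le> \<alpha> k \<and> \<alpha> k \<le> fw_amax g A (x k) (j k) (l k) \<and>
        x (Suc k) = x k + \<alpha> k *\<^sub>R fw_w g A (x k) (j k) (l k))"

end

theory Submission imports Defs begin

(* Write c_i = <g, a_i> for the gradient g at u = Ax.  The chosen direction has slope
  <g, v> <= min(c_j - <g,u>, <g,u> - c_l), so M := -<g,v> is at least (c_l - c_j)/2.
  Convexity gives, for every minimizer z, f(u) - fstar <= <g, A(x - z)> = sum (x_i - z_i) c_i,
  and since x_i - z_i > 0 forces i into the support of x, where c_i <= c_l, that sum is at most
  ||x - z||_1 (c_l - c_j)/2 <= ||x - z||_1 M.  Hence f(u) - fstar <= dist(x, Zstar) M, which
  combined with mu_star dist(x, Zstar)^2 <= 2 (f(u) - fstar) yields mu_star/2 (f(u) - fstar) <= M^2. *)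

lemma inner_matrix_vector_mult_column:
  fixes g :: "real^'m::finite" and A :: "real^'n::finite^'m"
  shows "g \<bullet> (A *v y) = (\<Sum>i\<in>UNIV. y $ i * (g \<bullet> column i A))"
  unfolding matrix_mult_sum by (simp add: inner_sum_right scalar_mult_eq_scaleR)

lemma convex_on_above_derivative:
  fixes f :: "'a::real_normed_vector \<Rightarrow> real"
  assumes "convex_on D f" "(f has_derivative f') (at u)" "u \<in> D" "y \<in> D"
  shows "f u + f' (y - u) \<le> f y"
proof -
  define w where "w = y - u"
  have "bounded_linear f'" using assms(2) by (rule has_derivative_bounded_linear)
  then have "linear f'" by (rule bounded_linear.linear)
  have "((\<lambda>t. u + t *\<^sub>R w) has_derivative (\<lambda>t. t *\<^sub>R w)) (at 0)"
    by (auto intro!: derivative_eq_intros)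
  moreover have "(f has_derivative f') (at (u + 0 *\<^sub>R w))" using assms(2) by simp
  ultimately have "((\<lambda>t. f (u + t *\<^sub>R w)) has_derivative (\<lambda>t. f' (t *\<^sub>R w))) (at 0)"
    by (rule has_derivative_compose[unfolded o_def])
  then have "((\<lambda>t. f (u + t *\<^sub>R w)) has_field_derivative f' w) (at 0)"
    unfolding has_field_derivative_def
    by (rule has_derivative_eq_rhs) (simp add: fun_eq_iff linear_scale[OF \<open>linear f'\<close>])
  then have "((\<lambda>t. (f (u + t *\<^sub>R w) - f u) / t) \<longlongrightarrow> f' w) (at 0)"
    by (simp add: has_field_derivative_iff)
  then have lim: "((\<lambda>t. (f (u + t *\<^sub>R w) - f u) / t) \<longlongrightarrow> f' w) (at_right 0)"
    by (rule filterlim_mono) (simp_all add: at_le)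
  have "\<forall>\<^sub>F t in at_right 0. t \<in> {0<..<(1::real)}"
    by (rule eventually_at_right_real) simp
  then have "\<forall>\<^sub>F t in at_right 0. (f (u + t *\<^sub>R w) - f u) / t \<le> f y - f u"
  proof eventually_elim
    case (elim t)
    have "u + t *\<^sub>R w = (1 - t) *\<^sub>R u + t *\<^sub>R y" by (simp add: w_def algebra_simps)
    then have "f (u + t *\<^sub>R w) \<le> (1 - t) * f u + t * f y"
      using convex_onD[OF assms(1), of t u y] elim assms(3,4) by simp
    then have "f (u + t *\<^sub>R w) - f u \<le> (f y - f u) * t" by (simp add: algebra_simps)
    then show ?case using elim by (simp add: pos_divide_le_eq)
  qed
  from tendsto_upperbound[OF lim this] show ?thesis by (simp add: w_def)
qed

lemma std_simplex_nonneg: "x \<in> std_simplex \<Longrightarrow> 0 \<le> x $ i"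
  by (simp add: std_simplex_def)

lemma std_simplex_sum: "x \<in> std_simplex \<Longrightarrow> (\<Sum>i\<in>UNIV. x $ i) = 1"
  by (simp add: std_simplex_def)

lemma std_simplex_le_one: "x \<in> std_simplex \<Longrightarrow> x $ i \<le> 1"
  using member_le_sum[of i UNIV "\<lambda>i. x $ i"] by (simp add: std_simplex_def)

lemma axis_in_std_simplex: "axis i 1 \<in> std_simplex"
  by (simp add: std_simplex_def axis_def)

lemma compact_std_simplex: "compact (std_simplex :: (real^'n::finite) set)"
proof (rule compact_eq_bounded_closed[THEN iffD2, OF conjI])
  have "norm x \<le> 1" if "x \<in> std_simplex" for x :: "real^'n"
    using norm_le_l1_cart[of x] that by (simp add: std_simplex_def)
  then show "bounded (std_simplex :: (real^'n) set)"
    unfolding bounded_iff by blast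
  have "std_simplex = (\<Inter>i. {x::real^'n. 0 \<le> x $ i}) \<inter> {x. (\<Sum>i\<in>UNIV. x $ i) = 1}"
    unfolding std_simplex_def by auto
  moreover have "closed {x::real^'n. 0 \<le> x $ i}" for i
    by (intro closed_Collect_le continuous_intros)
  moreover have "closed {x::real^'n. (\<Sum>i\<in>UNIV. x $ i) = 1}"
    by (intro closed_Collect_eq continuous_intros)
  ultimately show "closed (std_simplex :: (real^'n) set)"
    by (metis closed_INT closed_Int)
qed

lemma std_simplex_sum_ge_min:
  assumes "x \<in> std_simplex" "\<And>i. c j \<le> c i"
  shows "c j \<le> (\<Sum>i\<in>UNIV. x $ i * c i)"
proof -
  have "c j = (\<Sum>i\<in>UNIV. x $ i * c j)"
    using std_simplex_sum[OF assms(1)] by (simp add: sum_distrib_right[symmetric])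
  also have "\<dots> \<le> (\<Sum>i\<in>UNIV. x $ i * c i)"
    using assms std_simplex_nonneg by (intro sum_mono mult_left_mono) auto
  finally show ?thesis .
qed

lemma std_simplex_eq_axis_of_supp_singleton:
  assumes "x \<in> std_simplex" "supp_idx x = {l}"
  shows "x = axis l 1"
proof -
  have zero: "x $ i = 0" if "i \<noteq> l" for i
  proof -
    have "i \<notin> supp_idx x" using assms(2) that by simp
    then show ?thesis using std_simplex_nonneg[OF assms(1), of i] by (simp add: supp_idx_def)
  qed
  have "(\<Sum>i\<in>UNIV. x $ i) = (\<Sum>i\<in>UNIV. if i = l then x $ l else 0)"
    by (rule sum.cong) (simp_all add: zero)
  then have "x $ l = 1" by (simp add: std_simplex_sum[OF assms(1)])
  then show ?thesis by (simp add: vec_eq_iff axis_def zero)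
qed

lemma std_simplex_sum_diff_le_l1dist:
  assumes "x \<in> std_simplex" "z \<in> std_simplex"
    and "\<And>i. c j \<le> c i" "\<And>i. i \<in> supp_idx x \<Longrightarrow> c i \<le> c l"
  shows "(\<Sum>i\<in>UNIV. (x $ i - z $ i) * c i) \<le> l1dist x z * ((c l - c j) / 2)"
proof -
  define m where "m = (c l + c j) / 2"
  define r where "r = (c l - c j) / 2"
  have "(\<Sum>i\<in>UNIV. x $ i - z $ i) = 0"
    using assms(1,2) by (simp add: sum_subtractf std_simplex_sum)
  then have "(\<Sum>i\<in>UNIV. (x $ i - z $ i) * c i)
      = (\<Sum>i\<in>UNIV. (x $ i - z $ i) * (c i - m) + (x $ i - z $ i) * m)"
    by (simp add: algebra_simps)
  also have "\<dots> = (\<Sum>i\<in>UNIV. (x $ i - z $ i) * (c i - m))"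
    using \<open>(\<Sum>i\<in>UNIV. x $ i - z $ i) = 0\<close> by (simp add: sum.distrib sum_distrib_right[symmetric])
  also have "\<dots> \<le> (\<Sum>i\<in>UNIV. \<bar>x $ i - z $ i\<bar> * r)"
  proof (rule sum_mono)
    fix i
    show "(x $ i - z $ i) * (c i - m) \<le> \<bar>x $ i - z $ i\<bar> * r"
    proof (cases "x $ i - z $ i > 0")
      case True
      then have "i \<in> supp_idx x"
        using std_simplex_nonneg[OF assms(2), of i] by (simp add: supp_idx_def)
      then have "c i - m \<le> r" using assms(4) by (simp add: m_def r_def field_simps)
      then show ?thesis using True by (simp add: mult_left_mono)
    next
      case False
      have "- r \<le> c i - m" using assms(3)[of i] by (simp add: m_def r_def field_simps)
      then have "(x $ i - z $ i) * (c i - m) \<le> (x $ i - z $ i) * - r"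
        using False by (intro mult_left_mono_neg) auto
      then show ?thesis using False by (simp add: algebra_simps)
    qed
  qed
  also have "\<dots> = l1dist x z * r"
    by (simp add: l1dist_def sum_distrib_right)
  finally show ?thesis by (simp add: r_def)
qed

lemma fw_away_run_std_simplex:
  assumes "fw_away_run A grad x j l \<alpha>"
  shows "x k \<in> std_simplex"
proof (induction k)
  case 0
  then show ?case using assms by (simp add: fw_away_run_def)
next
  case (Suc k)
  define g where "g = grad (A *v x k)"
  have step: "0 \<le> \<alpha> k" "\<alpha> k \<le> fw_amax g A (x k) (j k) (l k)"
     "x (Suc k) = x k + \<alpha> k *\<^sub>R fw_w g A (x k) (j k) (l k)"
    using assms unfolding fw_away_run_def g_def Let_def by blast+
  note nonneg = std_simplex_nonneg[OF Suc] and total = std_simplex_sum[OF Suc]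
  show ?case
  proof (cases "fw_regular g A (x k) (j k) (l k)")
    case True
    then have "\<alpha> k \<le> 1" and next_x: "x (Suc k) = x k + \<alpha> k *\<^sub>R (axis (j k) 1 - x k)"
      using step by (simp_all add: fw_amax_def fw_w_def)
    moreover have coord: "x (Suc k) $ i = (1 - \<alpha> k) * x k $ i + (if i = j k then \<alpha> k else 0)" for i
      unfolding next_x by (simp add: axis_def algebra_simps)
    ultimately have "0 \<le> x (Suc k) $ i" for i
      using step(1) nonneg[of i] by simp
    moreover have "(\<Sum>i\<in>UNIV. x (Suc k) $ i) = 1"
      unfolding coord by (simp add: sum.distrib sum_distrib_left[symmetric] total)
    ultimately show ?thesis by (simp add: std_simplex_def)
  next
    case False
    then have amax: "\<alpha> k \<le> x k $ l k / (1 - x k $ l k)"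
      and next_x: "x (Suc k) = x k + \<alpha> k *\<^sub>R (x k - axis (l k) 1)"
      using step by (simp_all add: fw_amax_def fw_w_def)
    have coord: "x (Suc k) $ i = (1 + \<alpha> k) * x k $ i - (if i = l k then \<alpha> k else 0)" for i
      unfolding next_x by (simp add: axis_def algebra_simps)
    have "\<alpha> k * (1 - x k $ l k) \<le> x k $ l k"
      using amax step(1) std_simplex_le_one[OF Suc, of "l k"]
      by (cases "x k $ l k = 1") (simp_all add: pos_le_divide_eq)
    then have "0 \<le> x (Suc k) $ i" for i
      unfolding coord using step(1) nonneg[of i] by (auto simp: algebra_simps)
    moreover have "(\<Sum>i\<in>UNIV. x (Suc k) $ i) = 1"
      unfolding coord by (simp add: sum_subtractf sum_distrib_left[symmetric] total)
    ultimately show ?thesis by (simp add: std_simplex_def)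
  qed
qed

lemma fstar_attained:
  assumes "continuous_on std_simplex (\<lambda>y. f (A *v y))"
  obtains z where "z \<in> Zstar f A" "\<And>y. y \<in> std_simplex \<Longrightarrow> fstar f A \<le> f (A *v y)"
proof -
  obtain z where z: "z \<in> std_simplex" "\<And>y. y \<in> std_simplex \<Longrightarrow> f (A *v z) \<le> f (A *v y)"
    using continuous_attains_inf[OF compact_std_simplex _ assms] axis_in_std_simplex by blast
  then have "fstar f A = f (A *v z)"
    unfolding fstar_def by (intro cInf_eq_minimum) auto
  then show ?thesis using that z by (simp add: Zstar_def)
qed

lemma le_distZ_mult:
  assumes "Zstar f A \<noteq> {}" "0 \<le> M" "\<And>z. z \<in> Zstar f A \<Longrightarrow> h \<le> l1dist x z * M"
  shows "h \<le> distZ f A x * M"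
proof (cases "M = 0")
  case True
  then show ?thesis using assms(1,3) by auto
next
  case False
  then have "M > 0" using assms(2) by simp
  have "h / M \<le> distZ f A x"
    unfolding distZ_def
    using assms(1,3) \<open>M > 0\<close> by (intro cInf_greatest) (auto simp: divide_le_eq)
  then show ?thesis using \<open>M > 0\<close> by (simp add: divide_le_eq)
qed

lemma half_mult_le_square_of_quadratic_growth:
  fixes h d M :: real and \<mu> :: ereal
  assumes "0 < \<mu>" "0 \<le> h" "0 < h \<Longrightarrow> \<mu> \<le> ereal (2 * h / d\<^sup>2)" "h \<le> d * M"
  shows "\<mu> / 2 * ereal h \<le> ereal (M\<^sup>2)"
proof (cases "h = 0")
  case True
  then show ?thesis by (simp add: zero_ereal_def[symmetric])
next
  case False
  then have "0 < h" using assms(2) by simp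
  with assms(1,3) obtain m where m: "\<mu> = ereal m" "0 < m" "m \<le> 2 * h / d\<^sup>2"
    by (cases \<mu>) auto
  then have "d\<^sup>2 > 0" by (cases "d = 0") auto
  with m have "m * d\<^sup>2 \<le> 2 * h" by (simp add: le_divide_eq)
  then have "m * h * d\<^sup>2 \<le> 2 * h\<^sup>2"
    using \<open>0 < h\<close> mult_left_mono[of "m * d\<^sup>2" "2 * h" h] by (simp add: power2_eq_square algebra_simps)
  also have "h\<^sup>2 \<le> (d * M)\<^sup>2" using assms(2,4) by (intro power_mono) auto
  finally have "m * h * d\<^sup>2 \<le> 2 * M\<^sup>2 * d\<^sup>2" by (simp add: power_mult_distrib algebra_simps)
  then have "m / 2 * h \<le> M\<^sup>2" using \<open>d\<^sup>2 > 0\<close> by simp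
  then show ?thesis using m(1) by simp
qed

lemma inner_fw_dir_le:
  assumes "x \<in> std_simplex" "l \<in> supp_idx x" "\<And>i. g \<bullet> column j A \<le> g \<bullet> column i A"
  shows "g \<bullet> fw_dir g A x j l \<le> g \<bullet> (column j A - A *v x)"
    and "g \<bullet> fw_dir g A x j l \<le> g \<bullet> (A *v x - column l A)"
proof -
  have fw_gap_nonpos: "g \<bullet> (column j A - A *v x) \<le> 0"
    using std_simplex_sum_ge_min[OF assms(1), of "\<lambda>i. g \<bullet> column i A"] assms(3)
    by (simp add: inner_diff_right inner_matrix_vector_mult_column)
  have "g \<bullet> fw_dir g A x j l \<le> g \<bullet> (column j A - A *v x) \<and>
        g \<bullet> fw_dir g A x j l \<le> g \<bullet> (A *v x - column l A)"
  proof (cases "fw_regular g A x j l")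
    case regular: True
    have "g \<bullet> (column j A - A *v x) \<le> g \<bullet> (A *v x - column l A)"
    proof (cases "card (supp_idx x) = 1")
      case True
      \<comment> \<open>a regular step forced by a singleton support: x is the vertex e_l, so the away gap is 0\<close>
      then have "supp_idx x = {l}" using assms(2) by (auto simp: card_1_singleton_iff)
      with assms(1) have "x = axis l 1" by (rule std_simplex_eq_axis_of_supp_singleton)
      then have "A *v x = column l A" by (simp add: matrix_vector_mult_basis)
      then show ?thesis using fw_gap_nonpos by simp
    next
      case False
      then show ?thesis using regular by (simp add: fw_regular_def)
    qed
    then show ?thesis using regular by (simp add: fw_dir_def)
  next
    case False
    then show ?thesis by (simp add: fw_dir_def fw_regular_def)
  qed
  then show "g \<bullet> fw_dir g A x j l \<le> g \<bullet> (column j A - A *v x)"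
    and "g \<bullet> fw_dir g A x j l \<le> g \<bullet> (A *v x - column l A)" by simp_all
qed

lemma inner_diff_le_fw_dir:
  fixes A :: "real^'n::finite^'m::finite"
  assumes x: "x \<in> std_simplex" and z: "z \<in> std_simplex"
    and fw: "\<And>i. g \<bullet> column j A \<le> g \<bullet> column i A"
    and away: "l \<in> supp_idx x" "\<And>i. i \<in> supp_idx x \<Longrightarrow> g \<bullet> column i A \<le> g \<bullet> column l A"
  shows "g \<bullet> (A *v x - A *v z) \<le> - (g \<bullet> fw_dir g A x j l)"
    and "g \<bullet> (A *v x - A *v z) \<le> l1dist x z * - (g \<bullet> fw_dir g A x j l)"
proof -
  define c where "c i = g \<bullet> column i A" for i
  have Av: "g \<bullet> (A *v y) = (\<Sum>i\<in>UNIV. y $ i * c i)" for y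
    unfolding c_def by (rule inner_matrix_vector_mult_column)
  have fw_gap: "g \<bullet> fw_dir g A x j l \<le> c j - g \<bullet> (A *v x)"
    and away_gap: "g \<bullet> fw_dir g A x j l \<le> g \<bullet> (A *v x) - c l"
    using inner_fw_dir_le[OF x away(1) fw] by (simp_all add: c_def inner_diff_right)
  have "c j \<le> g \<bullet> (A *v z)"
    unfolding Av using z fw by (intro std_simplex_sum_ge_min) (simp_all add: c_def)
  then show "g \<bullet> (A *v x - A *v z) \<le> - (g \<bullet> fw_dir g A x j l)"
    using fw_gap by (simp add: inner_diff_right)
  have "g \<bullet> (A *v x - A *v z) = (\<Sum>i\<in>UNIV. (x $ i - z $ i) * c i)"
    by (simp add: inner_diff_right Av sum_subtractf algebra_simps)
  also have "\<dots> \<le> l1dist x z * ((c l - c j) / 2)"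
    using x z fw away by (intro std_simplex_sum_diff_le_l1dist) (simp_all add: c_def)
  also have "\<dots> \<le> l1dist x z * - (g \<bullet> fw_dir g A x j l)"
    using fw_gap away_gap by (intro mult_left_mono) (simp_all add: l1dist_def sum_nonneg)
  finally show "g \<bullet> (A *v x - A *v z) \<le> l1dist x z * - (g \<bullet> fw_dir g A x j l)" .
qed

lemma fw_away_direction_bounds:
  fixes A :: "real^'n::finite^'m::finite"
  assumes x: "x \<in> std_simplex"
    and fw: "\<And>i. g \<bullet> column j A \<le> g \<bullet> column i A"
    and away: "l \<in> supp_idx x" "\<And>i. i \<in> supp_idx x \<Longrightarrow> g \<bullet> column i A \<le> g \<bullet> column l A"
    and tangent: "\<And>y. y \<in> std_simplex \<Longrightarrow> f (A *v x) + g \<bullet> (A *v y - A *v x) \<le> f (A *v y)"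
    and cont: "continuous_on std_simplex (\<lambda>y. f (A *v y))"
    and mu: "mu_star f A > 0"
  shows "mu_star f A / 2 * ereal (f (A *v x) - fstar f A) \<le> ereal ((g \<bullet> fw_dir g A x j l)\<^sup>2)"
    and "g \<bullet> fw_dir g A x j l \<le> fstar f A - f (A *v x)"
proof -
  define h where "h = f (A *v x) - fstar f A"
  define M where "M = - (g \<bullet> fw_dir g A x j l)"
  obtain z0 where z0: "z0 \<in> Zstar f A" and fstar_le: "\<And>y. y \<in> std_simplex \<Longrightarrow> fstar f A \<le> f (A *v y)"
    using fstar_attained[OF cont] by blast
  have h_le: "h \<le> g \<bullet> (A *v x - A *v z)" if "z \<in> Zstar f A" for z
    using that tangent[of z] by (simp add: Zstar_def h_def inner_diff_right)
  have "h \<le> M"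
    using h_le[OF z0] inner_diff_le_fw_dir(1)[OF x _ fw away] z0 by (force simp: M_def Zstar_def)
  then show "g \<bullet> fw_dir g A x j l \<le> fstar f A - f (A *v x)" by (simp add: h_def M_def)
  have "0 \<le> h" using fstar_le[OF x] by (simp add: h_def)
  moreover have "h \<le> distZ f A x * M"
  proof (rule le_distZ_mult)
    show "Zstar f A \<noteq> {}" using z0 by blast
    show "0 \<le> M" using \<open>0 \<le> h\<close> \<open>h \<le> M\<close> by simp
    show "h \<le> l1dist x z * M" if "z \<in> Zstar f A" for z
      using h_le[OF that] inner_diff_le_fw_dir(2)[OF x _ fw away] that by (force simp: M_def Zstar_def)
  qed
  moreover have "mu_star f A \<le> ereal (2 * h / (distZ f A x)\<^sup>2)" if "0 < h"
    unfolding mu_star_def h_def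
    using that x by (intro INF_lower) (simp add: Zstar_def h_def)
  ultimately have "mu_star f A / 2 * ereal h \<le> ereal (M\<^sup>2)"
    using mu by (intro half_mult_le_square_of_quadratic_growth)
  then show "mu_star f A / 2 * ereal (f (A *v x) - fstar f A) \<le> ereal ((g \<bullet> fw_dir g A x j l)\<^sup>2)"
    by (simp add: h_def M_def)
qed

theorem lemma3:
  fixes A :: "real^'n::finite^'m::finite"
    and f :: "real^'m \<Rightarrow> real" and grad :: "real^'m \<Rightarrow> real^'m" and D :: "(real^'m) set"
    and x :: "nat \<Rightarrow> real^'n" and j l :: "nat \<Rightarrow> 'n" and \<alpha> :: "nat \<Rightarrow> real"
  assumes "\<exists>i i'. column i A \<noteq> column i' A"
    and "open D" and "convex D" and "convex_on D f"
    and "\<forall>u\<in>D. (f has_derivative (\<lambda>h. grad u \<bullet> h)) (at u)"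
    and "(\<lambda>y. A *v y) ` std_simplex \<subseteq> D"
    and "mu_star f A > 0"
    and "fw_away_run A grad x j l \<alpha>"
  shows "\<forall>k. let u = A *v x k; v = fw_dir (grad u) A (x k) (j k) (l k) in
           ereal ((grad u \<bullet> v)\<^sup>2) \<ge> mu_star f A / 2 * ereal (f u - fstar f A) \<and>
           grad u \<bullet> v \<le> fstar f A - f u"
proof
  fix k
  let ?g = "grad (A *v x k)"
  have in_D: "A *v y \<in> D" if "y \<in> std_simplex" for y
    using assms(6) that by blast
  have xk: "x k \<in> std_simplex" using assms(8) by (rule fw_away_run_std_simplex)
  have step: "\<And>i. ?g \<bullet> column (j k) A \<le> ?g \<bullet> column i A" "l k \<in> supp_idx (x k)"
    "\<And>i. i \<in> supp_idx (x k) \<Longrightarrow> ?g \<bullet> column i A \<le> ?g \<bullet> column (l k) A"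
    using assms(8) unfolding fw_away_run_def Let_def by blast+
  have tangent: "f (A *v x k) + ?g \<bullet> (A *v y - A *v x k) \<le> f (A *v y)" if "y \<in> std_simplex" for y
    using convex_on_above_derivative[OF assms(4) _ in_D[OF xk] in_D[OF that]] assms(5) in_D[OF xk]
    by simp
  have "continuous_on D f"
    using assms(5) by (intro has_derivative_continuous_on) (auto intro: has_derivative_at_withinI)
  then have cont: "continuous_on std_simplex (\<lambda>y. f (A *v y))"
    by (rule continuous_on_compose2[OF _ linear_continuous_on]) (use in_D in auto)
  show "let u = A *v x k; v = fw_dir (grad u) A (x k) (j k) (l k) in
          ereal ((grad u \<bullet> v)\<^sup>2) \<ge> mu_star f A / 2 * ereal (f u - fstar f A) \<and>
          grad u \<bullet> v \<le> fstar f A - f u"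
    using fw_away_direction_bounds[OF xk step tangent cont assms(7)] by (simp add: Let_def)
qed

end
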